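(* Let $G'$ be a connected graph and $x,v\in V(G')$ distinct vertices with $N_{G'}[x]\subseteq N_{G'}[v]$. Let $T$ be a search tree on $G=G'-x$ and $i\in\{0,\ldots,d_{T,v}\}$. Then $T(i,x,v)$ is a search tree on $G'$. Moreover, the vertices $T(i,x,v)$, $i\in\{0,\ldots,d_{T,v}\}$, lie on a path in $\mathcal{R}(G')$.
   Context: $N[\cdot]$ denotes the closed neighbourhood. For a connected graph $G$, a search tree on $G$ is a rooted tree with vertex set $V(G)$ defined recursively: its root is some vertex $r\in V(G)$, and the children of $r$ are the roots of search trees on the connected components of $G-r$. For a rooted tree $T$ and $w\in V(T)$, $T|w$ denotes the subtree rooted at $w$ and $d_{T,w}$ the distance from the root to $w$. Let $T$ be a search tree on $G$, let $b$ be a child of $a$ in $T$, and let $p$ be the parent of $a$ (if it exists). The $ab$-rotation transforms $T$ into the search tree $T'$ in which: $a$ is a child of $b$ and $b$ is a child of $p$ (or $b$ is the root if $a$ was the root); every subtree of $a$ in $T$ other than $T|b$ is a subtree of $a$ in $T'$; and every subtree $S$ of $b$ in $T$ is a subtree of $a$ in $T'$ if $a$ is adjacent in $G$ to some vertex of $S$, and a subtree of $b$ in $T'$ otherwise. The rotation graph $\mathcal{R}(G)$ has the search trees on $G$ as vertices, two adjacent iff they differ by one rotation. Insertion: for a rooted tree $T$, $v\in V(T)$ with $d=d_{T,v}$ and root-to-$v$ path $a_0,\ldots,a_d=v$, and $x\notin V(T)$: $T(0,x,v)$ has $x$ as new root with $T$ as its only subtree; for $1\le i\le d$, $T(i,x,v)$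 is obtained by subdividing the edge $a_{i-1}a_i$ with the new vertex $x$ (root unchanged). *)

theory Defs
  imports Main "HOL-Library.FSet"
begin

text \<open>A graph is given by a global edge set E of 2-element sets; every graph considered
is the subgraph induced by E on a vertex set S.  G' = (V', E) and G' - x is the
subgraph induced on V' - {x}.\<close>

definition adj :: "'a set set \<Rightarrow> 'a \<Rightarrow> 'a \<Rightarrow> bool" where
  "adj E u v \<longleftrightarrow> u \<noteq> v \<and> {u, v} \<in> E"

definition reach :: "'a set set \<Rightarrow> 'a set \<Rightarrow> 'a \<Rightarrow> 'a \<Rightarrow> bool" where
  "reach E S = (\<lambda>u w. u \<in> S \<and> w \<in> S \<and> adj E u w)\<^sup>*\<^sup>*"

definition connected_on :: "'a set set \<Rightarrow> 'a set \<Rightarrow> bool" where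
  "connected_on E S \<longleftrightarrow> S \<noteq> {} \<and> (\<forall>u\<in>S. \<forall>w\<in>S. reach E S u w)"

definition components :: "'a set set \<Rightarrow> 'a set \<Rightarrow> 'a set set" where
  "components E S = (\<lambda>u. {w \<in> S. reach E S u w}) ` S"

definition closed_nbhd :: "'a set set \<Rightarrow> 'a set \<Rightarrow> 'a \<Rightarrow> 'a set" where
  "closed_nbhd E V x = insert x {u \<in> V. adj E x u}"

datatype 'a rtree = Node 'a "'a rtree fset"

primrec troot :: "'a rtree \<Rightarrow> 'a" where
  "troot (Node r Ts) = r"

primrec tchildren :: "'a rtree \<Rightarrow> 'a rtree fset" where
  "tchildren (Node r Ts) = Ts"

primrec tverts :: "'a rtree \<Rightarrow> 'a set" where
  "tverts (Node r Ts) = insert r (\<Union> (fset (fimage tverts Ts)))"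

primrec subtrees :: "'a rtree \<Rightarrow> 'a rtree set" where
  "subtrees (Node r Ts) = insert (Node r Ts) (\<Union> (fset (fimage subtrees Ts)))"

definition is_child :: "'a rtree \<Rightarrow> 'a \<Rightarrow> 'a \<Rightarrow> bool" where
  "is_child T a b \<longleftrightarrow> (\<exists>S \<in> subtrees T. troot S = a \<and> (\<exists>U \<in> fset (tchildren S). troot U = b))"

text \<open>Distance d_{T,v} from the root to v (meaningful for v in tverts T).\<close>
primrec depth :: "'a \<Rightarrow> 'a rtree \<Rightarrow> nat" where
  "depth v (Node r Ts) =
     (if v = r then 0
      else Suc (Max (insert 0 (fset (fimage (\<lambda>S. if v \<in> tverts S then depth v S else 0) Ts)))))"

inductive search_tree :: "'a set set \<Rightarrow> 'a set \<Rightarrow> 'a rtree \<Rightarrow> bool" for E where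
  "\<lbrakk> connected_on E V; r \<in> V;
     inj_on tverts (fset Ts);
     tverts ` fset Ts = components E (V - {r});
     \<forall>S \<in> fset Ts. search_tree E (tverts S) S \<rbrakk>
   \<Longrightarrow> search_tree E V (Node r Ts)"

definition touches :: "'a set set \<Rightarrow> 'a \<Rightarrow> 'a rtree \<Rightarrow> bool" where
  "touches E a S \<longleftrightarrow> (\<exists>w \<in> tverts S. adj E a w)"

definition rot_local :: "'a set set \<Rightarrow> 'a \<Rightarrow> 'a \<Rightarrow> 'a rtree fset \<Rightarrow> 'a rtree" where
  "rot_local E a b Ts =
     (let Tb = (THE S. S |\<in>| Ts \<and> troot S = b); Ub = tchildren Tb
      in Node b (ffilter (\<lambda>S. \<not> touches E a S) Ub
                 |\<union>| {| Node a ((Ts |-| {|Tb|}) |\<union>| ffilter (touches E a) Ub) |}))"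

primrec rotate :: "'a set set \<Rightarrow> 'a \<Rightarrow> 'a \<Rightarrow> 'a rtree \<Rightarrow> 'a rtree" where
  "rotate E a b (Node r Ts) =
     (if r = a then rot_local E a b Ts else Node r (fimage (rotate E a b) Ts))"

definition rot_adj :: "'a set set \<Rightarrow> 'a set \<Rightarrow> 'a rtree \<Rightarrow> 'a rtree \<Rightarrow> bool" where
  "rot_adj E V T T' \<longleftrightarrow> search_tree E V T \<and> search_tree E V T' \<and>
     ((\<exists>a b. is_child T a b \<and> T' = rotate E a b T) \<or>
      (\<exists>a b. is_child T' a b \<and> T = rotate E a b T'))"

definition rot_path :: "'a set set \<Rightarrow> 'a set \<Rightarrow> 'a rtree list \<Rightarrow> bool" where
  "rot_path E V ps \<longleftrightarrow> ps \<noteq> [] \<and> distinct ps \<and> (\<forall>T \<in> set ps. search_tree E V T) \<and>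
     (\<forall>j. Suc j < length ps \<longrightarrow> rot_adj E V (ps ! j) (ps ! Suc j))"

primrec ins :: "'a rtree \<Rightarrow> nat \<Rightarrow> 'a \<Rightarrow> 'a \<Rightarrow> 'a rtree" where
  "ins (Node r Ts) i x v =
     (if i = 0 then Node x {| Node r Ts |}
      else Node r (fimage (\<lambda>S. if v \<in> tverts S then ins S (i - 1) x v else S) Ts))"

end

theory Submission
  imports Defs
begin

text \<open>Since \<open>N[x] \<subseteq> N[v]\<close>, every neighbour of \<open>x\<close> other than \<open>v\<close> is a neighbour of \<open>v\<close>.
Inserting \<open>x\<close> below the ancestors \<open>a\<^sub>0, \<dots>, a\<^bsub>i-1\<^esub>\<close> of \<open>v\<close> therefore changes the components
that arise when these ancestors are deleted only by adding \<open>x\<close> to the component of \<open>v\<close>,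
so \<open>T(i,x,v)\<close> is a search tree. For the same reason, among the subtrees of the child \<open>a\<^sub>i\<close>
of \<open>x\<close> only the one containing \<open>v\<close> has a vertex adjacent to \<open>x\<close>, and the \<open>x a\<^sub>i\<close>-rotation
turns \<open>T(i,x,v)\<close> into \<open>T(i+1,x,v)\<close>. The trees are pairwise distinct since \<open>x\<close> has depth
\<open>i\<close> in \<open>T(i,x,v)\<close>.\<close>

lemma adj_sym: "adj E u w \<longleftrightarrow> adj E w u"
  unfolding adj_def by (auto simp: insert_commute)

lemma reach_refl: "reach E S u u"
  unfolding reach_def by simp

lemma reach_trans: "reach E S a b \<Longrightarrow> reach E S b c \<Longrightarrow> reach E S a c"
  unfolding reach_def by (rule rtranclp_trans)

lemma reach_sym: "reach E S a b \<Longrightarrow> reach E S b a"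
proof -
  have "symp (\<lambda>u w. u \<in> S \<and> w \<in> S \<and> adj E u w)"
    by (auto simp: symp_def adj_sym)
  then show "reach E S a b \<Longrightarrow> reach E S b a"
    unfolding reach_def by (metis symp_rtranclp sympD)
qed

lemma reach_adj: "a \<in> S \<Longrightarrow> b \<in> S \<Longrightarrow> adj E a b \<Longrightarrow> reach E S a b"
  unfolding reach_def by auto

lemma reach_mono: "reach E S a b \<Longrightarrow> S \<subseteq> S' \<Longrightarrow> reach E S' a b"
  unfolding reach_def by (erule rtranclp_mono[THEN predicate2D, rotated]) auto

definition component :: "'a set set \<Rightarrow> 'a set \<Rightarrow> 'a \<Rightarrow> 'a set" where
  "component E S u = {w \<in> S. reach E S u w}"

lemma components_eq_image: "components E S = component E S ` S"
  unfolding components_def component_def ..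

lemma component_eq_iff_reach:
  "u \<in> S \<Longrightarrow> component E S u = component E S v \<longleftrightarrow> reach E S v u"
  unfolding component_def by (auto intro: reach_refl reach_trans reach_sym)

lemma components_eq_component:
  "C \<in> components E S \<Longrightarrow> v \<in> C \<Longrightarrow> C = component E S v"
  unfolding components_eq_image component_def by (auto intro: reach_trans reach_sym)

lemma components_subset: "C \<in> components E S \<Longrightarrow> C \<subseteq> S"
  unfolding components_eq_image component_def by auto

lemma Union_components: "\<Union> (components E S) = S"
  unfolding components_eq_image component_def by (auto intro: reach_refl)

lemma components_connected_on: "connected_on E W \<Longrightarrow> components E W = {W}"
  unfolding connected_on_def components_eq_image component_def by auto

lemma connected_on_insert:
  assumes "connected_on E W" "v \<in> W" "adj E x v"
  shows "connected_on E (insert x W)"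
proof -
  have W: "reach E (insert x W) u w" if "u \<in> W" "w \<in> W" for u w
    using assms that unfolding connected_on_def by (auto intro: reach_mono)
  have "reach E (insert x W) x v"
    using assms by (intro reach_adj) auto
  then have x: "reach E (insert x W) x w" if "w \<in> W" for w
    using W[OF assms(2) that] by (rule reach_trans)
  have "reach E (insert x W) u w" if "u \<in> insert x W" "w \<in> insert x W" for u w
    using that W x reach_sym[OF x] reach_refl by (cases "u = x"; cases "w = x") auto
  then show ?thesis
    unfolding connected_on_def by blast
qed

text \<open>The paper's situation \<open>G = G' - x\<close>, \<open>N[x] \<subseteq> N[v]\<close>, with \<open>W\<close> the vertex set of \<open>G\<close>.\<close>
definition dominated_by :: "'a set set \<Rightarrow> 'a set \<Rightarrow> 'a \<Rightarrow> 'a \<Rightarrow> bool" where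
  "dominated_by E W x v \<longleftrightarrow>
     v \<in> W \<and> x \<notin> W \<and> adj E x v \<and> (\<forall>u\<in>W. adj E x u \<longrightarrow> u = v \<or> adj E v u)"

lemma dominated_by_subset:
  "dominated_by E W x v \<Longrightarrow> v \<in> W' \<Longrightarrow> W' \<subseteq> W \<Longrightarrow> dominated_by E W' x v"
  unfolding dominated_by_def by blast

lemma closed_nbhd_subset_imp_dominated_by:
  assumes "x \<in> V" "x \<noteq> v" "v \<in> V" "closed_nbhd E V x \<subseteq> closed_nbhd E V v"
  shows "dominated_by E (V - {x}) x v"
  using assms unfolding dominated_by_def closed_nbhd_def by (auto simp: adj_sym)

lemma reach_insert_dominated:
  assumes dom: "dominated_by E S x v" and "reach E (insert x S) a b" "a \<in> S"
  shows "(b \<in> S \<and> reach E S a b) \<or> (b = x \<and> reach E S a v)"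
  using assms(2) unfolding reach_def[of E "insert x S"]
proof (induction rule: rtranclp_induct)
  case base
  then show ?case using \<open>a \<in> S\<close> by (simp add: reach_refl)
next
  case (step b c)
  then have bc: "b \<in> insert x S" "c \<in> insert x S" "adj E b c" by auto
  have "b \<noteq> c" using bc(3) by (simp add: adj_def)
  from step.IH show ?case
  proof
    assume b: "b \<in> S \<and> reach E S a b"
    show ?case
    proof (cases "c = x")
      case True
      then have "b = v \<or> adj E v b" using dom b bc(3) unfolding dominated_by_def by (metis adj_sym)
      then show ?thesis using b dom True unfolding dominated_by_def
        by (metis reach_adj reach_sym reach_trans)
    next
      case False
      then show ?thesis using b bc by (metis insertE reach_adj reach_trans)
    qed
  next
    assume b: "b = x \<and> reach E S a v"
    then have "c \<in> S" using bc \<open>b \<noteq> c\<close> by auto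
    then have "c = v \<or> adj E v c" using dom b bc(3) unfolding dominated_by_def by blast
    then show ?thesis using b dom \<open>c \<in> S\<close> unfolding dominated_by_def
      by (metis reach_adj reach_trans)
  qed
qed

lemma component_insert_dominated:
  assumes dom: "dominated_by E S x v"
  shows "component E (insert x S) x = insert x (component E S v)"
    and "u \<in> S \<Longrightarrow> reach E S v u \<Longrightarrow> component E (insert x S) u = insert x (component E S v)"
    and "u \<in> S \<Longrightarrow> \<not> reach E S v u \<Longrightarrow> component E (insert x S) u = component E S u"
proof -
  have "x \<notin> S" "v \<in> S" "reach E (insert x S) v x"
    using dom unfolding dominated_by_def by (auto simp: adj_sym intro: reach_adj)
  have S: "reach E (insert x S) a b \<longleftrightarrow> reach E S a b" if "a \<in> S" "b \<in> S" for a b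
    using reach_insert_dominated[OF dom _ that(1), of b] that \<open>x \<notin> S\<close>
    by (auto intro: reach_mono)
  have x: "reach E (insert x S) x b \<longleftrightarrow> reach E S v b" if "b \<in> S" for b
    using reach_insert_dominated[OF dom _ that, of x] S[OF \<open>v \<in> S\<close> that]
      \<open>reach E (insert x S) v x\<close>
    by (metis reach_sym reach_trans)
  show x_comp: "component E (insert x S) x = insert x (component E S v)"
    unfolding component_def using x \<open>x \<notin> S\<close> by (auto intro: reach_refl)
  show "component E (insert x S) u = insert x (component E S v)"
    if "u \<in> S" "reach E S v u"
    using component_eq_iff_reach[of u "insert x S" E x] x that x_comp by simp
  show "component E (insert x S) u = component E S u"
    if "u \<in> S" "\<not> reach E S v u"
  proof -
    have "\<not> reach E (insert x S) u x"
      using x that by (metis reach_sym)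
    then show ?thesis
      unfolding component_def using S that \<open>x \<notin> S\<close> by auto
  qed
qed

lemma components_insert_dominated:
  assumes dom: "dominated_by E S x v"
  shows "components E (insert x S) =
    insert (insert x (component E S v)) (components E S - {component E S v})"
proof -
  define A where "A = {u \<in> S. reach E S v u}"
  define B where "B = {u \<in> S. \<not> reach E S v u}"
  have "v \<in> A" using dom unfolding A_def dominated_by_def by (simp add: reach_refl)
  have "S = A \<union> B" unfolding A_def B_def by blast
  then have "components E (insert x S) =
      insert (component E (insert x S) x)
        (component E (insert x S) ` A \<union> component E (insert x S) ` B)"
    unfolding components_eq_image by (metis image_Un image_insert)
  also have "component E (insert x S) ` A = {insert x (component E S v)}"
    using component_insert_dominated(2)[OF dom] \<open>v \<in> A\<close> unfolding A_def by blast
  also have "component E (insert x S) ` B = component E S ` B"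
    using component_insert_dominated(3)[OF dom] unfolding B_def by simp
  also have "component E S ` B = components E S - {component E S v}"
    unfolding components_eq_image B_def using component_eq_iff_reach by fastforce
  finally show ?thesis
    using component_insert_dominated(1)[OF dom] by simp
qed

lemma search_tree_tverts: "search_tree E V T \<Longrightarrow> tverts T = V"
proof (induction rule: search_tree.induct)
  case (1 V r Ts)
  have "\<Union> (tverts ` fset Ts) = V - {r}"
    using 1(4) by (simp add: Union_components)
  then show ?case using 1(2) by auto
qed

lemma search_tree_connected_on: "search_tree E V T \<Longrightarrow> connected_on E V"
  by (auto elim: search_tree.cases)

lemma search_tree_NodeD:
  assumes "search_tree E V (Node r Ts)"
  shows "connected_on E V" "r \<in> V" "inj_on tverts (fset Ts)"
    "tverts ` fset Ts = components E (V - {r})" "\<And>S. S |\<in>| Ts \<Longrightarrow> search_tree E (tverts S) S"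
  using assms by (auto elim: search_tree.cases)

lemma search_tree_child_subset:
  assumes "search_tree E V (Node r Ts)" "S |\<in>| Ts"
  shows "tverts S \<subseteq> V - {r}"
proof -
  have "tverts S \<in> components E (V - {r})"
    using search_tree_NodeD(4)[OF assms(1)] assms(2) by (metis imageI)
  then show ?thesis by (rule components_subset)
qed

lemma search_tree_child_component:
  assumes "search_tree E V (Node r Ts)" "S |\<in>| Ts" "v \<in> tverts S"
  shows "tverts S = component E (V - {r}) v"
proof -
  have "tverts S \<in> components E (V - {r})"
    using search_tree_NodeD(4)[OF assms(1)] assms(2) by (metis imageI)
  then show ?thesis using assms(3) by (rule components_eq_component)
qed

lemma search_tree_child_unique:
  assumes "search_tree E V (Node r Ts)" "S |\<in>| Ts" "S' |\<in>| Ts" "v \<in> tverts S" "v \<in> tverts S'"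
  shows "S = S'"
  using assms search_tree_child_component[OF assms(1)] search_tree_NodeD(3)[OF assms(1)]
  by (metis inj_onD)

lemma search_tree_child_exists:
  assumes "search_tree E V (Node r Ts)" "v \<in> V" "v \<noteq> r"
  obtains S where "S |\<in>| Ts" "v \<in> tverts S"
proof -
  have "v \<in> \<Union> (tverts ` fset Ts)"
    using assms search_tree_NodeD(4)[OF assms(1)] Union_components[of E "V - {r}"] by simp
  then show ?thesis using that by blast
qed

lemma depth_child:
  assumes "search_tree E V (Node r Ts)" "S |\<in>| Ts" "v \<in> tverts S"
  shows "depth v (Node r Ts) = Suc (depth v S)"
proof -
  have "v \<noteq> r" using search_tree_child_subset[OF assms(1,2)] assms(3) by auto
  moreover have "insert 0 ((\<lambda>S. if v \<in> tverts S then depth v S else 0) ` fset Ts) = {0, depth v S}"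
    using assms search_tree_child_unique[OF assms(1)] by auto
  ultimately show ?thesis by simp
qed

lemma ins_0: "ins T 0 x v = Node x {|T|}"
  by (cases T) simp

lemma ins_Suc_Node:
  assumes "Sv |\<in>| Ts" "v \<in> tverts Sv" "\<And>S. S |\<in>| Ts \<Longrightarrow> v \<in> tverts S \<Longrightarrow> S = Sv"
  shows "ins (Node r Ts) (Suc i) x v = Node r (finsert (ins Sv i x v) (Ts |-| {|Sv|}))"
proof -
  define f where "f = (\<lambda>S. if v \<in> tverts S then ins S i x v else S)"
  have "f |`| (Ts |-| {|Sv|}) = Ts |-| {|Sv|}"
    by (rule fset.map_ident_strong) (use assms(3) in \<open>auto simp: f_def\<close>)
  moreover have "Ts = finsert Sv (Ts |-| {|Sv|})"
    using assms(1) by auto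
  ultimately have "f |`| Ts = finsert (ins Sv i x v) (Ts |-| {|Sv|})"
    using assms(2) by (metis f_def fimage_finsert)
  moreover have "ins (Node r Ts) (Suc i) x v = Node r (f |`| Ts)"
    by (simp add: f_def cong: if_cong)
  ultimately show ?thesis by simp
qed

lemma rotate_not_in_tverts: "a \<notin> tverts T \<Longrightarrow> rotate E a b T = T"
proof (induction T)
  case (Node r Ts)
  then have "rotate E a b |`| Ts = Ts"
    by (simp add: fset.map_ident_strong)
  then show ?case using Node.prems by auto
qed

lemma is_child_Node: "S |\<in>| Ts \<Longrightarrow> is_child (Node r Ts) r (troot S)"
  unfolding is_child_def by auto

lemma is_child_Node_lift: "is_child S a b \<Longrightarrow> S |\<in>| Ts \<Longrightarrow> is_child (Node r Ts) a b"
  unfolding is_child_def by auto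

lemma search_tree_child_containing:
  assumes st: "search_tree E V (Node r Ts)" and dom: "dominated_by E V x v"
    and "0 < depth v (Node r Ts)"
  obtains Sv where "Sv |\<in>| Ts" "v \<in> tverts Sv"
    "depth v (Node r Ts) = Suc (depth v Sv)"
    "search_tree E (tverts Sv) Sv" "dominated_by E (tverts Sv) x v"
    "\<And>i. ins (Node r Ts) (Suc i) x v = Node r (finsert (ins Sv i x v) (Ts |-| {|Sv|}))"
proof -
  have "v \<noteq> r" "v \<in> V" using assms unfolding dominated_by_def by (auto split: if_splits)
  then obtain Sv where Sv: "Sv |\<in>| Ts" "v \<in> tverts Sv"
    using search_tree_child_exists[OF st] by blast
  show ?thesis
  proof
    show "depth v (Node r Ts) = Suc (depth v Sv)"
      using depth_child[OF st Sv] .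
    show "search_tree E (tverts Sv) Sv"
      using search_tree_NodeD(5)[OF st Sv(1)] .
    show "dominated_by E (tverts Sv) x v"
      using dominated_by_subset[OF dom Sv(2)] search_tree_child_subset[OF st Sv(1)] by blast
    show "ins (Node r Ts) (Suc i) x v = Node r (finsert (ins Sv i x v) (Ts |-| {|Sv|}))" for i
      using ins_Suc_Node[OF Sv] search_tree_child_unique[OF st _ Sv(1) _ Sv(2)] by blast
  qed (use Sv in auto)
qed

lemma search_tree_Node_grow_child:
  assumes st: "search_tree E V (Node r Ts)" and dom: "dominated_by E V x v"
    and Sv: "Sv |\<in>| Ts" "v \<in> tverts Sv"
    and S': "search_tree E (insert x (tverts Sv)) S'"
  shows "search_tree E (insert x V) (Node r (finsert S' (Ts |-| {|Sv|})))"
proof -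
  note sub = search_tree_child_subset[OF st]
  have "x \<notin> V" "adj E x v" using dom unfolding dominated_by_def by auto
  have dom': "dominated_by E (V - {r}) x v"
    using dominated_by_subset[OF dom] sub[OF Sv(1)] Sv(2) by blast
  have tv_S': "tverts S' = insert x (tverts Sv)"
    using search_tree_tverts[OF S'] .
  have "tverts S' \<notin> tverts ` (fset Ts - {Sv})"
    using sub \<open>x \<notin> V\<close> tv_S' by auto
  moreover have "inj_on tverts (fset Ts - {Sv})"
    using search_tree_NodeD(3)[OF st] by (rule inj_on_diff)
  ultimately have inj: "inj_on tverts (fset (finsert S' (Ts |-| {|Sv|})))"
    by (auto simp: inj_on_insert intro: inj_on_diff)
  have "tverts ` fset (finsert S' (Ts |-| {|Sv|})) =
      insert (insert x (tverts Sv)) (tverts ` fset Ts - {tverts Sv})"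
    using tv_S' Sv(1)
      inj_on_image_set_diff[OF search_tree_NodeD(3)[OF st], where A = "fset Ts" and B = "{Sv}"]
    by simp
  also have "\<dots> = components E (insert x (V - {r}))"
    using components_insert_dominated[OF dom'] search_tree_NodeD(4)[OF st]
      search_tree_child_component[OF st Sv] by simp
  also have "insert x (V - {r}) = insert x V - {r}"
    using \<open>x \<notin> V\<close> search_tree_NodeD(2)[OF st] by auto
  finally have comps: "tverts ` fset (finsert S' (Ts |-| {|Sv|})) = components E (insert x V - {r})" .
  have "connected_on E (insert x V)"
    using connected_on_insert[OF search_tree_NodeD(1)[OF st]] dom unfolding dominated_by_def by blast
  then show ?thesis
    using search_tree_NodeD[OF st] inj comps S' tv_S' by (intro search_tree.intros) auto
qed

lemma touches_iff_contains:
  assumes st: "search_tree E V (Node r Ts)" and dom: "dominated_by E V x v"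
    and Sv: "Sv |\<in>| Ts" "v \<in> tverts Sv" and S: "S |\<in>| Ts"
  shows "touches E x S \<longleftrightarrow> S = Sv"
proof
  assume "S = Sv"
  then show "touches E x S"
    using Sv dom unfolding touches_def dominated_by_def by auto
next
  assume "touches E x S"
  then obtain w where w: "w \<in> tverts S" "adj E x w"
    unfolding touches_def by auto
  have "w \<in> V - {r}" "v \<in> V - {r}"
    using w(1) Sv(2) search_tree_child_subset[OF st] S Sv(1) by auto
  then have "reach E (V - {r}) v w"
    using dom w(2) unfolding dominated_by_def by (metis reach_adj reach_refl DiffD1)
  then have "w \<in> tverts Sv"
    using search_tree_child_component[OF st Sv] \<open>w \<in> V - {r}\<close> by (simp add: component_def)
  then show "S = Sv"
    using search_tree_child_unique[OF st S Sv(1) w(1)] by simp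
qed

lemma rotate_ins_0:
  assumes st: "search_tree E V (Node r Ts)" and dom: "dominated_by E V x v"
    and Sv: "Sv |\<in>| Ts" "v \<in> tverts Sv"
  shows "rotate E x r (ins (Node r Ts) 0 x v) = Node r (finsert (ins Sv 0 x v) (Ts |-| {|Sv|}))"
proof -
  have "x \<noteq> r"
    using dom search_tree_NodeD(2)[OF st] unfolding dominated_by_def by auto
  have "(THE S. S |\<in>| {|Node r Ts|} \<and> troot S = r) = Node r Ts"
    by auto
  moreover have "ffilter (touches E x) Ts = {|Sv|}" "ffilter (\<lambda>S. \<not> touches E x S) Ts = Ts |-| {|Sv|}"
    using touches_iff_contains[OF st dom Sv] Sv(1) by auto
  ultimately show ?thesis
    using \<open>x \<noteq> r\<close> by (simp add: ins_0 rot_local_def Let_def)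
qed

lemma search_tree_ins:
  assumes "search_tree E V T" "dominated_by E V x v" "i \<le> depth v T"
  shows "search_tree E (insert x V) (ins T i x v)"
  using assms
proof (induction i arbitrary: V T)
  case 0
  have "x \<notin> V" "v \<in> V" "adj E x v"
    using "0.prems"(2) unfolding dominated_by_def by auto
  have conn: "connected_on E V"
    using "0.prems"(1) by (rule search_tree_connected_on)
  then have "components E (insert x V - {x}) = {V}"
    using \<open>x \<notin> V\<close> components_connected_on by simp
  moreover have "connected_on E (insert x V)"
    using connected_on_insert[OF conn \<open>v \<in> V\<close> \<open>adj E x v\<close>] .
  ultimately show ?case
    using 0 search_tree_tverts[OF "0.prems"(1)]
    by (auto simp: ins_0 intro!: search_tree.intros)
next
  case (Suc i)
  obtain r Ts where T: "T = Node r Ts" by (cases T)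
  obtain Sv where Sv: "Sv |\<in>| Ts" "v \<in> tverts Sv" "depth v T = Suc (depth v Sv)"
    "search_tree E (tverts Sv) Sv" "dominated_by E (tverts Sv) x v"
    "ins T (Suc i) x v = Node r (finsert (ins Sv i x v) (Ts |-| {|Sv|}))"
    using Suc.prems unfolding T by (elim search_tree_child_containing) auto
  have "search_tree E (insert x (tverts Sv)) (ins Sv i x v)"
    using Suc.IH Sv Suc.prems(3) by simp
  then show ?case
    using search_tree_Node_grow_child Suc.prems Sv unfolding T by metis
qed

lemma depth_ins:
  assumes "search_tree E V T" "dominated_by E V x v" "i \<le> depth v T"
  shows "depth x (ins T i x v) = i"
  using assms
proof (induction i arbitrary: V T)
  case 0
  then show ?case by (simp add: ins_0)
next
  case (Suc i)
  obtain r Ts where T: "T = Node r Ts" by (cases T)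
  obtain Sv where Sv: "Sv |\<in>| Ts" "v \<in> tverts Sv" "depth v T = Suc (depth v Sv)"
    "search_tree E (tverts Sv) Sv" "dominated_by E (tverts Sv) x v"
    "ins T (Suc i) x v = Node r (finsert (ins Sv i x v) (Ts |-| {|Sv|}))"
    using Suc.prems unfolding T by (elim search_tree_child_containing) auto
  have "i \<le> depth v Sv" using Sv(3) Suc.prems(3) by simp
  have "x \<in> tverts (ins Sv i x v)"
    using search_tree_tverts[OF search_tree_ins[OF Sv(4,5) \<open>i \<le> depth v Sv\<close>]] by simp
  then have "depth x (ins T (Suc i) x v) = Suc (depth x (ins Sv i x v))"
    using depth_child search_tree_ins[OF Suc.prems] Sv(6) by (metis finsertI1)
  also have "depth x (ins Sv i x v) = i"
    using Suc.IH[OF Sv(4,5) \<open>i \<le> depth v Sv\<close>] .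
  finally show ?case .
qed

lemma ins_Suc_rotate:
  assumes "search_tree E V T" "dominated_by E V x v" "i < depth v T"
  shows "\<exists>b. is_child (ins T i x v) x b \<and> ins T (Suc i) x v = rotate E x b (ins T i x v)"
  using assms
proof (induction i arbitrary: V T)
  case (0 V T)
  obtain r Ts where T: "T = Node r Ts" by (cases T)
  obtain Sv where Sv: "Sv |\<in>| Ts" "v \<in> tverts Sv"
    "ins T (Suc 0) x v = Node r (finsert (ins Sv 0 x v) (Ts |-| {|Sv|}))"
    using "0.prems" unfolding T by (elim search_tree_child_containing) auto
  have "ins T 1 x v = rotate E x r (ins T 0 x v)"
    using rotate_ins_0 "0.prems" Sv unfolding T by (metis One_nat_def)
  moreover have "is_child (ins T 0 x v) x r"
    using is_child_Node[of T "{|T|}" x] by (simp add: T ins_0)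
  ultimately show ?case by auto
next
  case (Suc i)
  obtain r Ts where T: "T = Node r Ts" by (cases T)
  obtain Sv where Sv: "Sv |\<in>| Ts" "v \<in> tverts Sv" "depth v T = Suc (depth v Sv)"
    "search_tree E (tverts Sv) Sv" "dominated_by E (tverts Sv) x v"
    "\<And>i. ins T (Suc i) x v = Node r (finsert (ins Sv i x v) (Ts |-| {|Sv|}))"
    using Suc.prems unfolding T by (elim search_tree_child_containing) auto
  obtain b where b: "is_child (ins Sv i x v) x b"
    "ins Sv (Suc i) x v = rotate E x b (ins Sv i x v)"
    using Suc.IH[OF Sv(4,5)] Suc.prems(3) Sv(3) by auto
  have "x \<notin> tverts S" if "S |\<in>| Ts" for S
    using search_tree_child_subset[OF Suc.prems(1)[unfolded T] that] Suc.prems(2)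
    unfolding dominated_by_def by auto
  then have "rotate E x b |`| (Ts |-| {|Sv|}) = Ts |-| {|Sv|}"
    by (intro fset.map_ident_strong) (simp add: rotate_not_in_tverts)
  moreover have "x \<noteq> r"
    using search_tree_NodeD(2) Suc.prems unfolding T dominated_by_def by metis
  ultimately have "rotate E x b (ins T (Suc i) x v) = ins T (Suc (Suc i)) x v"
    using b(2) Sv(6) by simp
  moreover have "is_child (ins T (Suc i) x v) x b"
    using is_child_Node_lift[OF b(1)] Sv(6) by simp
  ultimately show ?case by metis
qed

lemma rot_path_map_upt:
  assumes "inj_on f {..d}" "\<And>i. i \<le> d \<Longrightarrow> search_tree E V (f i)"
    and "\<And>i. i < d \<Longrightarrow> rot_adj E V (f i) (f (Suc i))"
  shows "rot_path E V (map f [0..<Suc d])"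
proof -
  have "set [0..<Suc d] = {..d}" by auto
  then show ?thesis
    unfolding rot_path_def using assms
    by (auto simp: distinct_map nth_map_upt simp del: upt_Suc)
qed

theorem lemma2p2:
  fixes E :: "'a set set" and V' :: "'a set" and x v :: 'a and T :: "'a rtree"
  assumes "finite V'"
    and "connected_on E V'"
    and "x \<in> V'" and "v \<in> V'" and "x \<noteq> v"
    and "closed_nbhd E V' x \<subseteq> closed_nbhd E V' v"
    and "search_tree E (V' - {x}) T"
  shows "(\<forall>i \<le> depth v T. search_tree E V' (ins T i x v))
       \<and> (\<exists>ps. rot_path E V' ps \<and> (\<forall>i \<le> depth v T. ins T i x v \<in> set ps))"
proof -
  note st = assms(7)
  have dom: "dominated_by E (V' - {x}) x v"
    using closed_nbhd_subset_imp_dominated_by assms(3-6) by metis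
  have "insert x (V' - {x}) = V'"
    using assms(3) by auto
  then have st_ins: "search_tree E V' (ins T i x v)" if "i \<le> depth v T" for i
    using search_tree_ins[OF st dom that] by simp
  have "rot_path E V' (map (\<lambda>i. ins T i x v) [0..<Suc (depth v T)])"
  proof (rule rot_path_map_upt)
    show "inj_on (\<lambda>i. ins T i x v) {..depth v T}"
      using depth_ins[OF st dom] by (metis (no_types, lifting) atMost_iff inj_onI)
    show "rot_adj E V' (ins T i x v) (ins T (Suc i) x v)" if "i < depth v T" for i
      using ins_Suc_rotate[OF st dom that] st_ins that unfolding rot_adj_def by auto
  qed (rule st_ins)
  moreover have "ins T i x v \<in> set (map (\<lambda>i. ins T i x v) [0..<Suc (depth v T)])"
    if "i \<le> depth v T" for i
    using that by (auto simp del: upt_Suc)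
  ultimately show ?thesis
    using st_ins by blast
qed

end
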